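(* Let $k\ge2$ and let $A=\{a_1,\dots,a_n\}$ be a sorted multiset of positive integers ($a_1\le\dots\le a_n$). Then $$\mathrm{OPT}(A)=\min_{k\le j\le n}\mathrm{OPT_L}(A[1,j]).$$
   Context: $[n]=\{1,\dots,n\}$; $\Sigma(S,A)=\sum_{i\in S}a_i$; for pairwise disjoint $S_1,\dots,S_k\subseteq[n]$, $\mathcal{R}(S_1,\dots,S_k,A)=\max_i\Sigma(S_i,A)/\min_i\Sigma(S_i,A)$ if the minimum is positive and $+\infty$ otherwise. $\mathrm{OPT}(A)$ is the minimum of $\mathcal{R}(S_1,\dots,S_k,A)$ over all $k$-tuples of pairwise disjoint subsets of $[n]$ (the $k$-SSR problem). $\mathrm{OPT_L}(A)$ is the minimum over such $k$-tuples additionally satisfying $n\in\bigcup_{i=1}^kS_i$ (the $k$-SSR$_L$ problem: the largest-index element must be used). $A[l,r]$ denotes the sorted multiset consisting of the items $a_i$ with $l\le i\le r$ (re-indexed in order). *)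

theory Defs
  imports Complex_Main "HOL-Library.Extended_Real"
begin

text \<open>Items are a function a :: nat => nat on indices 1..n; a k-tuple of subsets
is a function S :: nat => nat set, only S 1, ..., S k matter.\<close>

definition SigmaS :: "nat set \<Rightarrow> (nat \<Rightarrow> nat) \<Rightarrow> nat" where
  "SigmaS S a = (\<Sum>i\<in>S. a i)"

definition ratioR :: "nat \<Rightarrow> (nat \<Rightarrow> nat set) \<Rightarrow> (nat \<Rightarrow> nat) \<Rightarrow> ereal" where
  "ratioR k S a =
     (if (\<forall>i\<in>{1..k}. SigmaS (S i) a > 0)
      then ereal (real (Max ((\<lambda>i. SigmaS (S i) a) ` {1..k})) /
                  real (Min ((\<lambda>i. SigmaS (S i) a) ` {1..k})))
      else \<infinity>)"

definition valid_tuple :: "nat \<Rightarrow> nat \<Rightarrow> (nat \<Rightarrow> nat set) \<Rightarrow> bool" where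
  "valid_tuple k n S \<longleftrightarrow>
     (\<forall>i\<in>{1..k}. S i \<subseteq> {1..n}) \<and>
     (\<forall>i\<in>{1..k}. \<forall>j\<in>{1..k}. i \<noteq> j \<longrightarrow> S i \<inter> S j = {})"

definition OPT :: "nat \<Rightarrow> nat \<Rightarrow> (nat \<Rightarrow> nat) \<Rightarrow> ereal" where
  "OPT k n a = (INF S \<in> {S. valid_tuple k n S}. ratioR k S a)"

definition OPT_L :: "nat \<Rightarrow> nat \<Rightarrow> (nat \<Rightarrow> nat) \<Rightarrow> ereal" where
  "OPT_L k n a = (INF S \<in> {S. valid_tuple k n S \<and> n \<in> (\<Union>i\<in>{1..k}. S i)}. ratioR k S a)"

end

theory Submission
  imports Defs
begin

text \<open>A solution of a prefix instance \<open>A[1,j]\<close> is a solution of \<open>A\<close>. Conversely, a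
tuple of finite ratio has \<open>k\<close> nonempty pairwise disjoint parts, hence uses at least \<open>k\<close>
items; if \<open>j\<close> is the largest index it uses, it is a solution of \<open>A[1,j]\<close> that uses
the last item, and \<open>j \<ge> k\<close>.\<close>

lemma valid_tuple_mono:
  assumes "valid_tuple k j S" and "j \<le> n"
  shows "valid_tuple k n S"
proof -
  have "{1..j} \<subseteq> {1..n}"
    using assms(2) by auto
  then show ?thesis
    using assms(1) unfolding valid_tuple_def by blast
qed

lemma OPT_le_OPT_L:
  assumes "j \<le> n"
  shows "OPT k n a \<le> OPT_L k j a"
  unfolding OPT_def OPT_L_def
proof (rule INF_superset_mono)
  show "{S. valid_tuple k j S \<and> j \<in> (\<Union>i\<in>{1..k}. S i)} \<subseteq> {S. valid_tuple k n S}"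
    using valid_tuple_mono[OF _ assms] by blast
qed simp

lemma ratioR_eq_infinity:
  assumes "\<exists>i\<in>{1..k}. S i = {}"
  shows "ratioR k S a = \<infinity>"
proof -
  have "\<not> (\<forall>i\<in>{1..k}. SigmaS (S i) a > 0)"
    using assms unfolding SigmaS_def by fastforce
  then show ?thesis
    unfolding ratioR_def by (rule if_not_P)
qed

lemma card_Union_valid_tuple:
  assumes "valid_tuple k n S" and "\<forall>i\<in>{1..k}. S i \<noteq> {}"
  shows "k \<le> card (\<Union>i\<in>{1..k}. S i)"
proof -
  have fin: "\<forall>i\<in>{1..k}. finite (S i)"
    using assms(1) unfolding valid_tuple_def by (meson finite_atLeastAtMost finite_subset)
  have "k = (\<Sum>i\<in>{1..k}. 1)" by simp
  also have "\<dots> \<le> (\<Sum>i\<in>{1..k}. card (S i))"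
    by (rule sum_mono) (use assms(2) fin in \<open>auto simp: Suc_le_eq card_gt_0_iff\<close>)
  also have "\<dots> = card (\<Union>i\<in>{1..k}. S i)"
    using assms(1) fin unfolding valid_tuple_def by (subst card_UN_disjoint) auto
  finally show ?thesis .
qed

lemma valid_tuple_ex_last_item:
  assumes "valid_tuple k n S" and "\<forall>i\<in>{1..k}. S i \<noteq> {}" and "1 \<le> k"
  obtains j where "j \<in> {k..n}" and "valid_tuple k j S" and "j \<in> (\<Union>i\<in>{1..k}. S i)"
proof -
  define U where "U = (\<Union>i\<in>{1..k}. S i)"
  have U_sub: "U \<subseteq> {1..n}"
    using assms(1) unfolding valid_tuple_def U_def by blast
  then have U_fin: "finite U"
    using finite_subset by blast
  have k_le: "k \<le> card U"
    using card_Union_valid_tuple[OF assms(1,2)] unfolding U_def .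
  with assms(3) have "U \<noteq> {}" by auto
  then have Max_in: "Max U \<in> U"
    using U_fin by simp
  have U_prefix: "U \<subseteq> {1..Max U}"
    using U_sub U_fin by auto
  have "k \<le> Max U"
    using k_le card_mono[OF _ U_prefix] by simp
  moreover have "Max U \<le> n"
    using Max_in U_sub by auto
  moreover have "valid_tuple k (Max U) S"
    using assms(1) U_prefix unfolding valid_tuple_def U_def by blast
  ultimately show ?thesis
    using that Max_in unfolding U_def by simp
qed

lemma INF_OPT_L_le_ratioR:
  assumes "valid_tuple k n S" and "1 \<le> k"
  shows "(INF j \<in> {k..n}. OPT_L k j a) \<le> ratioR k S a"
proof (cases "\<forall>i\<in>{1..k}. S i \<noteq> {}")
  case True
  obtain j where j: "j \<in> {k..n}" and prefix_solution: "valid_tuple k j S" "j \<in> (\<Union>i\<in>{1..k}. S i)"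
    by (rule valid_tuple_ex_last_item[OF assms(1) True assms(2)])
  from j have "(INF j \<in> {k..n}. OPT_L k j a) \<le> OPT_L k j a"
    by (rule INF_lower)
  also have "\<dots> \<le> ratioR k S a"
    unfolding OPT_L_def by (rule INF_lower) (use prefix_solution in simp)
  finally show ?thesis .
qed (simp add: ratioR_eq_infinity)

theorem lemma25:
  fixes k n :: nat and a :: "nat \<Rightarrow> nat"
  assumes "k \<ge> 2"
    and "\<forall>i\<in>{1..n}. a i > 0"
    and "\<forall>i j. 1 \<le> i \<longrightarrow> i \<le> j \<longrightarrow> j \<le> n \<longrightarrow> a i \<le> a j"
  shows "OPT k n a = (INF j \<in> {k..n}. OPT_L k j a)"
proof (rule antisym)
  show "OPT k n a \<le> (INF j \<in> {k..n}. OPT_L k j a)"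
    by (rule INF_greatest) (simp add: OPT_le_OPT_L)
  show "(INF j \<in> {k..n}. OPT_L k j a) \<le> OPT k n a"
    unfolding OPT_def
    by (rule INF_greatest, rule INF_OPT_L_le_ratioR) (use assms(1) in auto)
qed

end
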